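(* Let $v\in T_1^\circ$ be a term of size $p$. Then for every $\beta\in B_\bullet$, one has $v(1)\cdot\partial\beta = \partial^p\beta\cdot v(1)$ in $B_\bullet$, where $v(1)$ is the evaluation of $v$ at the identity element $1$ of $B_\bullet$ with respect to the operation $\circ$.
   Context: $T_1^\circ$ is the set of terms in a single variable $x$ built with a binary operator $\circ$; the size of a term is its number of variable occurrences. The group $B_\bullet$ is generated by $\sigma_1,\sigma_2,\dots$ and $a_1,a_2,\dots$ subject to: $\sigma_j\sigma_i=\sigma_i\sigma_j$ and $a_j\sigma_i=\sigma_ia_j$ for $j\ge i+2$; $a_j\sigma_i=\sigma_{i+1}a_j$ and $a_ja_i=a_{i+1}a_j$ for $j\le i-1$; $\sigma_j\sigma_i\sigma_j=\sigma_i\sigma_j\sigma_i$, $\sigma_i\sigma_ja_i=a_j\sigma_i$ and $\sigma_j\sigma_ia_j=a_i\sigma_i$ for $j=i+1$. $\partial$ is the endomorphism of $B_\bullet$ with $\partial\sigma_i=\sigma_{i+1}$, $\partial a_i=a_{i+1}$. The operation $\circ$ on $B_\bullet$ is $\beta\circ\gamma=\beta\cdot\partial\gamma\cdot a_1$; thus $x(1)=1$ and $(v_1\circ v_2)(1)=v_1(1)\cdot\partial v_2(1)\cdot a_1$. *)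

theory Defs
  imports Main
begin

(* Generators of B_bullet, 0-based: Sig i stands for sigma_(i+1), Agen i for a_(i+1). *)
datatype gen = Sig nat | Agen nat

(* A letter is a generator together with an exponent flag: (False,g) = g, (True,g) = g^-1. *)
type_synonym letter = "bool \<times> gen"
type_synonym word = "letter list"

definition pos :: "gen \<Rightarrow> letter" where "pos g = (False, g)"

(* Defining relations of B_bullet (0-based indices; the index conditions are shift invariant). *)
inductive brel :: "word \<Rightarrow> word \<Rightarrow> bool" where
  r1: "j \<ge> i + 2 \<Longrightarrow> brel [pos (Sig j), pos (Sig i)] [pos (Sig i), pos (Sig j)]"
| r2: "j \<ge> i + 2 \<Longrightarrow> brel [pos (Agen j), pos (Sig i)] [pos (Sig i), pos (Agen j)]"
| r3: "j + 1 \<le> i \<Longrightarrow> brel [pos (Agen j), pos (Sig i)] [pos (Sig (i+1)), pos (Agen j)]"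
| r4: "j + 1 \<le> i \<Longrightarrow> brel [pos (Agen j), pos (Agen i)] [pos (Agen (i+1)), pos (Agen j)]"
| r5: "j = i + 1 \<Longrightarrow> brel [pos (Sig j), pos (Sig i), pos (Sig j)] [pos (Sig i), pos (Sig j), pos (Sig i)]"
| r6: "j = i + 1 \<Longrightarrow> brel [pos (Sig i), pos (Sig j), pos (Agen i)] [pos (Agen j), pos (Sig i)]"
| r7: "j = i + 1 \<Longrightarrow> brel [pos (Sig j), pos (Sig i), pos (Agen j)] [pos (Agen i), pos (Sig i)]"

(* Equality in the group B_bullet: the congruence on words generated by free
   cancellation and the defining relations (i.e. equality in the presented group). *)
inductive beq :: "word \<Rightarrow> word \<Rightarrow> bool" where
  refl: "beq u u"
| sym: "beq u v \<Longrightarrow> beq v u"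
| trans: "beq u v \<Longrightarrow> beq v w \<Longrightarrow> beq u w"
| cong: "beq u v \<Longrightarrow> beq (x @ u @ y) (x @ v @ y)"
| cancel: "beq [(e, g), (\<not> e, g)] []"
| rel: "brel u v \<Longrightarrow> beq u v"

fun shift_gen :: "gen \<Rightarrow> gen" where
  "shift_gen (Sig i) = Sig (i + 1)"
| "shift_gen (Agen i) = Agen (i + 1)"

definition shift :: "word \<Rightarrow> word" where
  "shift w = map (\<lambda>(e, g). (e, shift_gen g)) w"

datatype tm = X | Op tm tm

fun tsize :: "tm \<Rightarrow> nat" where
  "tsize X = 1"
| "tsize (Op v1 v2) = tsize v1 + tsize v2"

fun eval1 :: "tm \<Rightarrow> word" where
  "eval1 X = []"
| "eval1 (Op v1 v2) = eval1 v1 @ shift (eval1 v2) @ [pos (Agen 0)]"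

end

theory Submission
  imports Defs
begin

text \<open>The relations \<open>a_1 sigma_i = sigma_(i+1) a_1\<close> and \<open>a_1 a_i = a_(i+1) a_1\<close> for
  \<open>i \<ge> 2\<close>, together with their inverses, give \<open>a_1 \<cdot> \<partial>\<beta> = \<partial>\<^sup>2\<beta> \<cdot> a_1\<close>.
  By induction on \<open>v = v1 \<circ> v2\<close>, the factor \<open>\<partial>\<beta>\<close> then moves to the left of
  \<open>v(1) = v1(1) \<cdot> \<partial>(v2(1)) \<cdot> a_1\<close>: past \<open>a_1\<close> it becomes \<open>\<partial>(\<partial>\<beta>)\<close>, past
  \<open>\<partial>(v2(1))\<close> it becomes \<open>\<partial>(\<partial>\<^sup>p\<^sup>2\<beta>)\<close> by the shifted induction hypothesis for \<open>v2\<close>,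
  and past \<open>v1(1)\<close> it becomes \<open>\<partial>\<^sup>p\<^sup>1(\<partial>\<^sup>p\<^sup>2\<beta>)\<close>.\<close>

lemmas [trans] = beq.trans

lemma shift_Nil [simp]: "shift [] = []"
  by (simp add: shift_def)

lemma shift_Cons [simp]: "shift ((e, g) # u) = (e, shift_gen g) # shift u"
  by (simp add: shift_def)

lemma shift_append [simp]: "shift (u @ v) = shift u @ shift v"
  by (simp add: shift_def)

lemma brel_shift: "brel u v \<Longrightarrow> brel (shift u) (shift v)"
  by (induction rule: brel.induct)
    (auto simp: pos_def intro: brel.intros[unfolded pos_def, simplified])

lemma beq_shift: "beq u v \<Longrightarrow> beq (shift u) (shift v)"
  by (induction rule: beq.induct)
    (auto intro: beq.intros brel_shift simp del: append.simps append_assoc)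

lemma beq_append: "beq u u' \<Longrightarrow> beq v v' \<Longrightarrow> beq (u @ v) (u' @ v')"
  using beq.cong[of u u' "[]" v] beq.cong[of v v' u' "[]"] by (auto intro: beq.trans)

lemma beq_commute_letter_inverse:
  assumes "beq (w @ [(e, x)]) ((e, y) # w)"
  shows "beq (w @ [(\<not> e, x)]) ((\<not> e, y) # w)"
proof -
  have "beq (w @ [(\<not> e, x)]) ([(\<not> e, y), (e, y)] @ w @ [(\<not> e, x)])"
    using beq_append[OF beq.sym[OF beq.cancel[of "\<not> e" y]] beq.refl] by simp
  also have "beq \<dots> ([(\<not> e, y)] @ (w @ [(e, x)]) @ [(\<not> e, x)])"
    using beq.cong[OF beq.sym[OF assms], of "[(\<not> e, y)]" "[(\<not> e, x)]"] by simp
  also have "beq \<dots> (((\<not> e, y) # w) @ [(e, x), (\<not> e, x)] @ [])"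
    by (simp add: beq.refl)
  also have "beq \<dots> (((\<not> e, y) # w) @ [] @ [])"
    by (rule beq.cong[OF beq.cancel])
  finally show ?thesis by simp
qed

lemma a1_shift_gen:
  "beq [pos (Agen 0), (False, shift_gen g)] [(False, shift_gen (shift_gen g)), pos (Agen 0)]"
  by (cases g) (auto simp: pos_def intro!: beq.rel brel.r3[unfolded pos_def, simplified]
      brel.r4[unfolded pos_def, simplified])

lemma a1_shift_letter:
  "beq [pos (Agen 0), (e, shift_gen g)] [(e, shift_gen (shift_gen g)), pos (Agen 0)]"
  using a1_shift_gen[of g] beq_commute_letter_inverse[of "[pos (Agen 0)]" False] by (cases e) auto

lemma a1_shift: "beq (pos (Agen 0) # shift \<beta>) (shift (shift \<beta>) @ [pos (Agen 0)])"
proof (induction \<beta>)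
  case Nil
  show ?case by (simp add: beq.refl)
next
  case (Cons l \<beta>)
  obtain e g where l: "l = (e, g)"
    by fastforce
  have "beq ([pos (Agen 0), (e, shift_gen g)] @ shift \<beta>)
            ([(e, shift_gen (shift_gen g))] @ pos (Agen 0) # shift \<beta>)"
    using beq_append[OF a1_shift_letter beq.refl] by simp
  also have "beq \<dots> ([(e, shift_gen (shift_gen g))] @ shift (shift \<beta>) @ [pos (Agen 0)])"
    by (rule beq_append[OF beq.refl Cons.IH])
  finally show ?case
    using l by simp
qed

lemma eval1_shift: "beq (eval1 v @ shift \<beta>) ((shift ^^ tsize v) \<beta> @ eval1 v)"
proof (induction v arbitrary: \<beta>)
  case X
  show ?case by (simp add: beq.refl)
next
  case (Op v1 v2)
  let ?a = "pos (Agen 0)"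
  have "beq ((eval1 v1 @ shift (eval1 v2)) @ ?a # shift \<beta>)
            ((eval1 v1 @ shift (eval1 v2)) @ shift (shift \<beta>) @ [?a])"
    by (rule beq_append[OF beq.refl a1_shift])
  also have "beq \<dots> (eval1 v1 @ shift ((shift ^^ tsize v2) \<beta> @ eval1 v2) @ [?a])"
    using beq.cong[OF beq_shift[OF Op.IH(2)[of \<beta>]], of "eval1 v1" "[?a]"] by simp
  also have "beq \<dots> (((shift ^^ tsize v1) ((shift ^^ tsize v2) \<beta>) @ eval1 v1)
                     @ shift (eval1 v2) @ [?a])"
    using beq_append[OF Op.IH(1) beq.refl] by simp
  finally show ?case
    by (simp add: funpow_add)
qed

theorem lemma2p7:
  fixes v :: tm and p :: nat and \<beta> :: word
  assumes "tsize v = p"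
  shows "beq (eval1 v @ shift \<beta>) ((shift ^^ p) \<beta> @ eval1 v)"
  using eval1_shift assms by blast

end
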